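(* Let $\underline{\theta} < 0 < \overline{\theta}$ and $\underline{\delta B} < 0 < \overline{\delta B}$ be real numbers. Work in $\mathbb{R}^5$ with coordinates $(\psi, z^{+}, z^{-}, \theta, \delta p)$ and define the three polytopes $$\mathcal{P}_{0,0,0} = \{(\psi,z^+,z^-)=(0,0,0),\ \delta p = 0,\ \underline{\theta} \le \theta \le \overline{\theta}\},$$ $$\mathcal{P}_{1,1,0} = \{(\psi,z^+,z^-)=(1,1,0),\ \underline{\delta B}\,\theta \le \delta p \le \overline{\delta B}\,\theta,\ 0 \le \theta \le \overline{\theta}\},$$ $$\mathcal{P}_{1,0,1} = \{(\psi,z^+,z^-)=(1,0,1),\ \overline{\delta B}\,\theta \le \delta p \le \underline{\delta B}\,\theta,\ \underline{\theta} \le \theta \le 0\},$$ and let $\mathcal{P} = \operatorname{conv}(\mathcal{P}_{0,0,0} \cup \mathcal{P}_{1,1,0} \cup \mathcal{P}_{1,0,1})$. Then each of the following inequalities is facet-defining for $\mathcal{P}$ (i.e. valid for $\mathcal{P}$, and the face of $\mathcal{P}$ on which it holds with equality has dimension $\dim \mathcal{P} - 1$): 1. $\underline{\theta} z^{+} + \theta \ge \underline{\theta}$; 2. $\overline{\theta} z^{-} + \theta \le \overline{\theta}$; 3. $-\overline{\theta}\,\underline{\delta B}\, z^{+} - \underline{\theta}\,\overline{\delta B}\, z^{-} + \delta p \ge 0$; 4. $-\overline{\theta}\,\overline{\delta B}\, z^{+} - \underline{\theta}\,\underline{\delta B}\, z^{-} + \delta p \le 0$; 5. $\overline{\theta}\,\underline{\delta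 B}\, z^{+} + \overline{\theta}\,\overline{\delta B}\, z^{-} + \overline{\delta B}\,\theta - \delta p \le \overline{\theta}\,\overline{\delta B}$; 6. $\overline{\theta}\,\overline{\delta B}\, z^{+} + \overline{\theta}\,\underline{\delta B}\, z^{-} + \underline{\delta B}\,\theta - \delta p \ge \overline{\theta}\,\underline{\delta B}$; 7. $\underline{\theta}\,\overline{\delta B}\, z^{+} + \underline{\theta}\,\underline{\delta B}\, z^{-} + \overline{\delta B}\,\theta - \delta p \ge \underline{\theta}\,\overline{\delta B}$; 8. $\underline{\theta}\,\underline{\delta B}\, z^{+} + \underline{\theta}\,\overline{\delta B}\, z^{-} + \underline{\delta B}\,\theta - \delta p \le \underline{\theta}\,\underline{\delta B}$.
   Context: This models a single transmission branch with a FACTS device: $\psi$ indicates installation of the device, $z^+$ (resp. $z^-$) indicates that the device is installed and the phase angle difference $\theta$ is nonnegative (resp. nonpositive), $\delta p$ is the change in power flow induced by the device, $[\underline{\theta},\overline{\theta}]$ are the bounds on the angle difference and $[\underline{\delta B},\overline{\delta B}]$ the bounds on the susceptance change. The polytope $\mathcal{P}$ satisfies the equation $\psi = z^+ + z^-$. *)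

theory Defs
  imports "HOL-Analysis.Analysis"
begin

text \<open>Points of R^5 are tuples (psi, zp, zm, theta, dp) of type real*real*real*real*real
  (a euclidean_space). thl, thu: angle bounds; bl, bu: susceptance-change bounds.\<close>

type_synonym pt = "real \<times> real \<times> real \<times> real \<times> real"

definition P000 :: "real \<Rightarrow> real \<Rightarrow> real \<Rightarrow> real \<Rightarrow> pt set" where
  "P000 thl thu bl bu = {(psi, zp, zm, th, dp). psi = 0 \<and> zp = 0 \<and> zm = 0 \<and> dp = 0
      \<and> thl \<le> th \<and> th \<le> thu}"

definition P110 :: "real \<Rightarrow> real \<Rightarrow> real \<Rightarrow> real \<Rightarrow> pt set" where
  "P110 thl thu bl bu = {(psi, zp, zm, th, dp). psi = 1 \<and> zp = 1 \<and> zm = 0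
      \<and> bl * th \<le> dp \<and> dp \<le> bu * th \<and> 0 \<le> th \<and> th \<le> thu}"

definition P101 :: "real \<Rightarrow> real \<Rightarrow> real \<Rightarrow> real \<Rightarrow> pt set" where
  "P101 thl thu bl bu = {(psi, zp, zm, th, dp). psi = 1 \<and> zp = 0 \<and> zm = 1
      \<and> bu * th \<le> dp \<and> dp \<le> bl * th \<and> thl \<le> th \<and> th \<le> 0}"

definition Pconv :: "real \<Rightarrow> real \<Rightarrow> real \<Rightarrow> real \<Rightarrow> pt set" where
  "Pconv thl thu bl bu = convex hull (P000 thl thu bl bu \<union> P110 thl thu bl bu \<union> P101 thl thu bl bu)"

definition facet_le :: "'a::euclidean_space set \<Rightarrow> ('a \<Rightarrow> real) \<Rightarrow> real \<Rightarrow> bool" where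
  "facet_le P f b \<longleftrightarrow> (\<forall>x\<in>P. f x \<le> b) \<and> aff_dim (P \<inter> {x. f x = b}) = aff_dim P - 1"

definition facet_ge :: "'a::euclidean_space set \<Rightarrow> ('a \<Rightarrow> real) \<Rightarrow> real \<Rightarrow> bool" where
  "facet_ge P f b \<longleftrightarrow> (\<forall>x\<in>P. f x \<ge> b) \<and> aff_dim (P \<inter> {x. f x = b}) = aff_dim P - 1"

end

theory Submission
  imports Defs
begin

text \<open>All three pieces lie in the hyperplane \<open>\<psi> = z\<^sup>+ + z\<^sup>-\<close>, so \<open>\<P>\<close> has dimension at most 4.
  For each inequality it then suffices to check validity on the pieces, to find a point of a piece
  where it is strict, and to find four affinely independent points of the pieces where it is tight:
  adding the strict point raises the affine dimension by one, so the tight face has dimension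
  exactly 3 and \<open>\<P>\<close> dimension exactly 4.\<close>

lemma affine_linear_vimage:
  assumes "linear f" "affine S"
  shows "affine (f -` S)"
  using assms unfolding affine_def by (simp add: linear_add linear_scale)

lemma aff_dim_insert_notin_affine:
  fixes y :: "'a::euclidean_space"
  assumes "affine A" "S \<subseteq> A" "y \<notin> A"
  shows "aff_dim (insert y S) = aff_dim S + 1"
proof -
  have "affine hull S \<subseteq> A"
    using assms(2,1) by (rule hull_minimal)
  then show ?thesis
    using assms(3) by (auto simp: aff_dim_insert)
qed

lemma aff_dim_eq_3_by_hyperplanes:
  fixes p q r s u v w :: "'a::euclidean_space"
  assumes "u \<bullet> r \<noteq> u \<bullet> s"
    and "v \<bullet> r = v \<bullet> s" "v \<bullet> q \<noteq> v \<bullet> s"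
    and "w \<bullet> r = w \<bullet> s" "w \<bullet> q = w \<bullet> s" "w \<bullet> p \<noteq> w \<bullet> s"
  shows "aff_dim {p, q, r, s} = 3"
proof -
  have "aff_dim {r, s} = 1"
    using aff_dim_insert_notin_affine[of "{x. u \<bullet> x = u \<bullet> s}" "{s}" r] assms(1)
    by (simp add: affine_hyperplane)
  moreover have "aff_dim {q, r, s} = aff_dim {r, s} + 1"
    using aff_dim_insert_notin_affine[of "{x. v \<bullet> x = v \<bullet> s}" "{r, s}" q] assms(2,3)
    by (simp add: affine_hyperplane)
  moreover have "aff_dim {p, q, r, s} = aff_dim {q, r, s} + 1"
    using aff_dim_insert_notin_affine[of "{x. w \<bullet> x = w \<bullet> s}" "{q, r, s}" p] assms(4-6)
    by (simp add: affine_hyperplane)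
  ultimately show ?thesis
    by simp
qed

lemma facet_le_convex_hullI:
  fixes f :: "'a::euclidean_space \<Rightarrow> real"
  assumes lin: "linear f"
    and valid: "\<forall>x\<in>U. f x \<le> b"
    and strict: "y \<in> U" "f y < b"
    and tight: "T \<subseteq> U" "\<forall>x\<in>T. f x = b"
    and dim: "aff_dim U \<le> aff_dim T + 1"
  shows "facet_le (convex hull U) f b"
proof -
  let ?F = "convex hull U \<inter> {x. f x = b}"
  have "convex hull U \<subseteq> f -` {..b}"
    using valid by (intro hull_minimal convex_linear_vimage[OF lin]) auto
  moreover have "aff_dim T \<le> aff_dim ?F"
    using tight hull_subset[of U convex] by (intro aff_dim_subset) auto
  moreover have "aff_dim (insert y ?F) = aff_dim ?F + 1"
    using strict(2) affine_linear_vimage[OF lin affine_sing, of b]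
    by (intro aff_dim_insert_notin_affine[of "f -` {b}"]) auto
  moreover have "aff_dim (insert y ?F) \<le> aff_dim U"
    using strict(1) hull_subset[of U convex] aff_dim_subset[of "insert y ?F" "convex hull U"]
    by (auto simp: aff_dim_convex_hull)
  ultimately show ?thesis
    using dim unfolding facet_le_def aff_dim_convex_hull by auto
qed

lemma facet_ge_iff_facet_le_uminus:
  "facet_ge P f b \<longleftrightarrow> facet_le P (\<lambda>x. - f x) (- b)"
  unfolding facet_ge_def facet_le_def by simp

lemma facet_ge_convex_hullI:
  fixes f :: "'a::euclidean_space \<Rightarrow> real"
  assumes "linear f"
    and "\<forall>x\<in>U. f x \<ge> b"
    and "y \<in> U" "f y > b"
    and "T \<subseteq> U" "\<forall>x\<in>T. f x = b"
    and "aff_dim U \<le> aff_dim T + 1"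
  shows "facet_ge (convex hull U) f b"
  unfolding facet_ge_iff_facet_le_uminus
  using assms by (intro facet_le_convex_hullI[where y = y and T = T] linear_compose_neg) auto

context
  fixes thl thu bl bu :: real
  assumes signs: "thl < 0" "0 < thu" "bl < 0" "0 < bu"
begin

abbreviation pieces :: "pt set" where
  "pieces \<equiv> P000 thl thu bl bu \<union> P110 thl thu bl bu \<union> P101 thl thu bl bu"

lemma aff_dim_pieces_le: "aff_dim pieces \<le> 4"
proof -
  have "pieces \<subseteq> {x. ((1, -1, -1, 0, 0)::pt) \<bullet> x = 0}"
    by (auto simp: P000_def P110_def P101_def)
  then have "aff_dim pieces \<le> aff_dim {x. ((1, -1, -1, 0, 0)::pt) \<bullet> x = 0}"
    by (rule aff_dim_subset)
  also have "\<dots> = 4"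
    by (simp add: zero_prod_def)
  finally show ?thesis .
qed

lemma facet_le_PconvI:
  assumes "aff_dim T = 3" "T \<subseteq> pieces" "\<forall>x\<in>T. f x = b"
    and "linear f" "\<forall>x\<in>pieces. f x \<le> b" "y \<in> pieces" "f y < b"
  shows "facet_le (Pconv thl thu bl bu) f b"
  unfolding Pconv_def using assms aff_dim_pieces_le
  by (intro facet_le_convex_hullI[where y = y and T = T]) auto

lemma facet_ge_PconvI:
  assumes "aff_dim T = 3" "T \<subseteq> pieces" "\<forall>x\<in>T. f x = b"
    and "linear f" "\<forall>x\<in>pieces. f x \<ge> b" "y \<in> pieces" "f y > b"
  shows "facet_ge (Pconv thl thu bl bu) f b"
  unfolding Pconv_def using assms aff_dim_pieces_le
  by (intro facet_ge_convex_hullI[where y = y and T = T]) auto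

lemma facet_angle_lower:
  "facet_ge (Pconv thl thu bl bu) (\<lambda>(psi, zp, zm, th, dp). thl * zp + th) thl"
proof -
  have "aff_dim ({(1, 0, 1, thl, bl * thl), (1, 0, 1, thl, bu * thl),
      (1, 1, 0, 0, 0), (0, 0, 0, thl, 0)} :: pt set) = 3"
    by (rule aff_dim_eq_3_by_hyperplanes[where
          u = "(1, 0, 0, 0, 0)" and v = "(0, 0, 1, 0, 0)" and w = "(0, 0, - bu * thl, 0, 1)"])
      (use signs in auto)
  then show ?thesis
    by (rule facet_ge_PconvI[where y = "(0, 0, 0, thu, 0)"])
      (use signs in \<open>auto simp: P000_def P110_def P101_def linear_iff algebra_simps
        mult_less_0_iff zero_less_mult_iff\<close>)
qed

lemma facet_angle_upper:
  "facet_le (Pconv thl thu bl bu) (\<lambda>(psi, zp, zm, th, dp). thu * zm + th) thu"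
proof -
  have "aff_dim ({(1, 1, 0, thu, bu * thu), (1, 1, 0, thu, bl * thu),
      (1, 0, 1, 0, 0), (0, 0, 0, thu, 0)} :: pt set) = 3"
    by (rule aff_dim_eq_3_by_hyperplanes[where
          u = "(1, 0, 0, 0, 0)" and v = "(0, 1, 0, 0, 0)" and w = "(0, - bl * thu, 0, 0, 1)"])
      (use signs in auto)
  then show ?thesis
    by (rule facet_le_PconvI[where y = "(0, 0, 0, thl, 0)"])
      (use signs in \<open>auto simp: P000_def P110_def P101_def linear_iff algebra_simps
        mult_less_0_iff zero_less_mult_iff\<close>)
qed

text \<open>For the remaining inequalities validity on the pieces rests on bilinear bounds such as
  \<open>bl * thu \<le> bl * th\<close> for \<open>th \<le> thu\<close>, hence the monotonicity rules for products.\<close>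

lemma facet_flow_lower:
  "facet_ge (Pconv thl thu bl bu) (\<lambda>(psi, zp, zm, th, dp). - thu * bl * zp - thl * bu * zm + dp) 0"
proof -
  have "aff_dim ({(1, 0, 1, thl, bu * thl), (1, 1, 0, thu, bl * thu),
      (0, 0, 0, thu, 0), (0, 0, 0, thl, 0)} :: pt set) = 3"
    by (rule aff_dim_eq_3_by_hyperplanes[where
          u = "(0, 0, 0, 1, 0)" and v = "(1, 0, 0, 0, 0)" and w = "(0, 0, 1, 0, 0)"])
      (use signs in auto)
  then show ?thesis
    by (rule facet_ge_PconvI[where y = "(1, 1, 0, 0, 0)"],
        use signs in \<open>auto simp: P000_def P110_def P101_def linear_iff algebra_simps
        mult_less_0_iff zero_less_mult_iff\<close>)
      (smt (verit) mult_left_mono mult_right_mono mult_left_mono_neg mult_right_mono_neg mult.commute)+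
qed

lemma facet_flow_upper:
  "facet_le (Pconv thl thu bl bu) (\<lambda>(psi, zp, zm, th, dp). - thu * bu * zp - thl * bl * zm + dp) 0"
proof -
  have "aff_dim ({(1, 0, 1, thl, bl * thl), (1, 1, 0, thu, bu * thu),
      (0, 0, 0, thu, 0), (0, 0, 0, thl, 0)} :: pt set) = 3"
    by (rule aff_dim_eq_3_by_hyperplanes[where
          u = "(0, 0, 0, 1, 0)" and v = "(1, 0, 0, 0, 0)" and w = "(0, 0, 1, 0, 0)"])
      (use signs in auto)
  then show ?thesis
    by (rule facet_le_PconvI[where y = "(1, 1, 0, 0, 0)"],
        use signs in \<open>auto simp: P000_def P110_def P101_def linear_iff algebra_simps
        mult_less_0_iff zero_less_mult_iff\<close>)
      (smt (verit) mult_left_mono mult_right_mono mult_left_mono_neg mult_right_mono_neg mult.commute)+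
qed

lemma facet_envelope_bu_thu:
  "facet_le (Pconv thl thu bl bu)
    (\<lambda>(psi, zp, zm, th, dp). thu * bl * zp + thu * bu * zm + bu * th - dp) (thu * bu)"
proof -
  have "aff_dim ({(1, 0, 1, thl, bu * thl), (1, 1, 0, thu, bl * thu),
      (1, 0, 1, 0, 0), (0, 0, 0, thu, 0)} :: pt set) = 3"
    by (rule aff_dim_eq_3_by_hyperplanes[where
          u = "(1, 0, 0, 0, 0)" and v = "(0, 1, 0, 0, 0)" and w = "(0, - bl * thu, 0, 0, 1)"])
      (use signs in auto)
  then show ?thesis
    by (rule facet_le_PconvI[where y = "(0, 0, 0, thl, 0)"],
        use signs in \<open>auto simp: P000_def P110_def P101_def linear_iff algebra_simps
        mult_less_0_iff zero_less_mult_iff\<close>)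
      (smt (verit) mult_left_mono mult_right_mono mult_left_mono_neg mult_right_mono_neg mult.commute)+
qed

lemma facet_envelope_bl_thu:
  "facet_ge (Pconv thl thu bl bu)
    (\<lambda>(psi, zp, zm, th, dp). thu * bu * zp + thu * bl * zm + bl * th - dp) (thu * bl)"
proof -
  have "aff_dim ({(1, 0, 1, thl, bl * thl), (1, 1, 0, thu, bu * thu),
      (1, 0, 1, 0, 0), (0, 0, 0, thu, 0)} :: pt set) = 3"
    by (rule aff_dim_eq_3_by_hyperplanes[where
          u = "(1, 0, 0, 0, 0)" and v = "(0, 1, 0, 0, 0)" and w = "(0, - bu * thu, 0, 0, 1)"])
      (use signs in auto)
  then show ?thesis
    by (rule facet_ge_PconvI[where y = "(0, 0, 0, thl, 0)"],
        use signs in \<open>auto simp: P000_def P110_def P101_def linear_iff algebra_simps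
        mult_less_0_iff zero_less_mult_iff\<close>)
      (smt (verit) mult_left_mono mult_right_mono mult_left_mono_neg mult_right_mono_neg mult.commute)+
qed

lemma facet_envelope_bu_thl:
  "facet_ge (Pconv thl thu bl bu)
    (\<lambda>(psi, zp, zm, th, dp). thl * bu * zp + thl * bl * zm + bu * th - dp) (thl * bu)"
proof -
  have "aff_dim ({(1, 1, 0, thu, bu * thu), (1, 0, 1, thl, bl * thl),
      (1, 1, 0, 0, 0), (0, 0, 0, thl, 0)} :: pt set) = 3"
    by (rule aff_dim_eq_3_by_hyperplanes[where
          u = "(1, 0, 0, 0, 0)" and v = "(0, 0, 1, 0, 0)" and w = "(0, 0, - bl * thl, 0, 1)"])
      (use signs in auto)
  then show ?thesis
    by (rule facet_ge_PconvI[where y = "(0, 0, 0, thu, 0)"],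
        use signs in \<open>auto simp: P000_def P110_def P101_def linear_iff algebra_simps
        mult_less_0_iff zero_less_mult_iff\<close>)
      (smt (verit) mult_left_mono mult_right_mono mult_left_mono_neg mult_right_mono_neg mult.commute)+
qed

lemma facet_envelope_bl_thl:
  "facet_le (Pconv thl thu bl bu)
    (\<lambda>(psi, zp, zm, th, dp). thl * bl * zp + thl * bu * zm + bl * th - dp) (thl * bl)"
proof -
  have "aff_dim ({(1, 1, 0, thu, bl * thu), (1, 0, 1, thl, bu * thl),
      (1, 1, 0, 0, 0), (0, 0, 0, thl, 0)} :: pt set) = 3"
    by (rule aff_dim_eq_3_by_hyperplanes[where
          u = "(1, 0, 0, 0, 0)" and v = "(0, 0, 1, 0, 0)" and w = "(0, 0, - bu * thl, 0, 1)"])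
      (use signs in auto)
  then show ?thesis
    by (rule facet_le_PconvI[where y = "(0, 0, 0, thu, 0)"],
        use signs in \<open>auto simp: P000_def P110_def P101_def linear_iff algebra_simps
        mult_less_0_iff zero_less_mult_iff\<close>)
      (smt (verit) mult_left_mono mult_right_mono mult_left_mono_neg mult_right_mono_neg mult.commute)+
qed

end

theorem theorem1:
  fixes thl thu bl bu :: real
  assumes "thl < 0" "0 < thu" "bl < 0" "0 < bu"
  defines "P \<equiv> Pconv thl thu bl bu"
  shows "facet_ge P (\<lambda>(psi, zp, zm, th, dp). thl * zp + th) thl
    \<and> facet_le P (\<lambda>(psi, zp, zm, th, dp). thu * zm + th) thu
    \<and> facet_ge P (\<lambda>(psi, zp, zm, th, dp). - thu * bl * zp - thl * bu * zm + dp) 0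
    \<and> facet_le P (\<lambda>(psi, zp, zm, th, dp). - thu * bu * zp - thl * bl * zm + dp) 0
    \<and> facet_le P (\<lambda>(psi, zp, zm, th, dp). thu * bl * zp + thu * bu * zm + bu * th - dp) (thu * bu)
    \<and> facet_ge P (\<lambda>(psi, zp, zm, th, dp). thu * bu * zp + thu * bl * zm + bl * th - dp) (thu * bl)
    \<and> facet_ge P (\<lambda>(psi, zp, zm, th, dp). thl * bu * zp + thl * bl * zm + bu * th - dp) (thl * bu)
    \<and> facet_le P (\<lambda>(psi, zp, zm, th, dp). thl * bl * zp + thl * bu * zm + bl * th - dp) (thl * bl)"
  unfolding P_def
  by (intro conjI facet_angle_lower facet_angle_upper facet_flow_lower facet_flow_upper
      facet_envelope_bu_thu facet_envelope_bl_thu facet_envelope_bu_thl facet_envelope_bl_thl assms)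

end
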